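(* Let $A$ be a Dedekind domain. The following are equivalent: (1) $A$ has torsion divisor class group; (2) every overring of $A$ is a localization of $A$; (3) every overring of $A$ is well-centered on $A$; (4) there is no overring $B$ of $A$ with $B\neq A$, $B=A[b]$ for a single element $b$, and $\mathcal U(B)=\mathcal U(A)$.
   Context: An overring of $A$ is a subring of the field of fractions of $A$ containing $A$. $\mathcal U(R)$ is the unit group of a ring $R$. $B$ is well-centered on $A$ if for each $b\in B$ there is $u\in\mathcal U(B)$ with $ub\in A$. $B$ is a localization of $A$ if $B=S^{-1}A$ for a multiplicatively closed set $S$ of nonzero elements of $A$. *)

theory Defs
  imports Main
begin

text \<open>Setting: the field of fractions K of A is the ambient type 'k (a field);
  A is a subring of 'k such that every element of 'k is a quotient of elements of A.\<close>

definition subring :: "'k::field set \<Rightarrow> bool" where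
  "subring R \<longleftrightarrow> 0 \<in> R \<and> 1 \<in> R \<and> (\<forall>x\<in>R. \<forall>y\<in>R. x + y \<in> R \<and> x - y \<in> R \<and> x * y \<in> R)"

definition is_fraction_field_of :: "'k::field set \<Rightarrow> bool" where
  "is_fraction_field_of A \<longleftrightarrow> subring A \<and>
     (\<forall>x. \<exists>a\<in>A. \<exists>s\<in>A. s \<noteq> 0 \<and> x = a / s)"

definition units_of_ring :: "'k::field set \<Rightarrow> 'k set" where
  "units_of_ring R = {u \<in> R. u \<noteq> 0 \<and> inverse u \<in> R}"

definition ring_ideal :: "'k::field set \<Rightarrow> 'k set \<Rightarrow> bool" where
  "ring_ideal A I \<longleftrightarrow> I \<subseteq> A \<and> 0 \<in> I \<and> (\<forall>x\<in>I. \<forall>y\<in>I. x + y \<in> I) \<and>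
     (\<forall>a\<in>A. \<forall>x\<in>I. a * x \<in> I)"

definition fin_generated_ideal :: "'k::field set \<Rightarrow> 'k set \<Rightarrow> bool" where
  "fin_generated_ideal A I \<longleftrightarrow> (\<exists>F. finite F \<and> F \<subseteq> I \<and>
     I = {x. \<exists>c. (\<forall>f\<in>F. c f \<in> A) \<and> x = (\<Sum>f\<in>F. c f * f)})"

definition noetherian_ring :: "'k::field set \<Rightarrow> bool" where
  "noetherian_ring A \<longleftrightarrow> (\<forall>I. ring_ideal A I \<longrightarrow> fin_generated_ideal A I)"

definition prime_ideal_of :: "'k::field set \<Rightarrow> 'k set \<Rightarrow> bool" where
  "prime_ideal_of A P \<longleftrightarrow> ring_ideal A P \<and> P \<noteq> A \<and>
     (\<forall>a\<in>A. \<forall>b\<in>A. a * b \<in> P \<longrightarrow> a \<in> P \<or> b \<in> P)"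

definition maximal_ideal_of :: "'k::field set \<Rightarrow> 'k set \<Rightarrow> bool" where
  "maximal_ideal_of A M \<longleftrightarrow> ring_ideal A M \<and> M \<noteq> A \<and>
     (\<forall>J. ring_ideal A J \<and> M \<subseteq> J \<longrightarrow> J = M \<or> J = A)"

definition integral_over :: "'k::field set \<Rightarrow> 'k \<Rightarrow> bool" where
  "integral_over A x \<longleftrightarrow> (\<exists>(n::nat) c. (\<forall>i<n. c i \<in> A) \<and> x ^ n + (\<Sum>i<n. c i * x ^ i) = 0)"

definition integrally_closed :: "'k::field set \<Rightarrow> bool" where
  "integrally_closed A \<longleftrightarrow> (\<forall>x. integral_over A x \<longrightarrow> x \<in> A)"

definition dedekind_domain :: "'k::field set \<Rightarrow> bool" where
  "dedekind_domain A \<longleftrightarrow> is_fraction_field_of A \<and> noetherian_ring A \<and> integrally_closed A \<and>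
     (\<forall>P. prime_ideal_of A P \<and> P \<noteq> {0} \<longrightarrow> maximal_ideal_of A P)"

definition fractional_ideal :: "'k::field set \<Rightarrow> 'k set \<Rightarrow> bool" where
  "fractional_ideal A I \<longleftrightarrow> I \<noteq> {0} \<and> 0 \<in> I \<and> (\<forall>x\<in>I. \<forall>y\<in>I. x + y \<in> I) \<and>
     (\<forall>a\<in>A. \<forall>x\<in>I. a * x \<in> I) \<and> (\<exists>d\<in>A. d \<noteq> 0 \<and> (\<forall>x\<in>I. d * x \<in> A))"

definition submod_mult :: "'k::field set \<Rightarrow> 'k set \<Rightarrow> 'k set" where
  "submod_mult I J = {x. \<exists>(n::nat) f g. (\<forall>i<n. f i \<in> I \<and> g i \<in> J) \<and> x = (\<Sum>i<n. f i * g i)}"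

fun submod_pow :: "'k::field set \<Rightarrow> 'k set \<Rightarrow> nat \<Rightarrow> 'k set" where
  "submod_pow A I 0 = A"
| "submod_pow A I (Suc n) = submod_mult I (submod_pow A I n)"

definition principal_frac :: "'k::field set \<Rightarrow> 'k set \<Rightarrow> bool" where
  "principal_frac A I \<longleftrightarrow> (\<exists>x. x \<noteq> 0 \<and> I = {x * a | a. a \<in> A})"

text \<open>For a Dedekind domain the divisor class group is the group of nonzero fractional
  ideals modulo principal ones; it is torsion iff every class has finite order.\<close>
definition torsion_class_group :: "'k::field set \<Rightarrow> bool" where
  "torsion_class_group A \<longleftrightarrow>
     (\<forall>I. fractional_ideal A I \<longrightarrow> (\<exists>n>0. principal_frac A (submod_pow A I n)))"

definition overring :: "'k::field set \<Rightarrow> 'k set \<Rightarrow> bool" where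
  "overring A B \<longleftrightarrow> subring B \<and> A \<subseteq> B"

definition mult_closed_nonzero :: "'k::field set \<Rightarrow> 'k set \<Rightarrow> bool" where
  "mult_closed_nonzero A S \<longleftrightarrow> S \<subseteq> A - {0} \<and> 1 \<in> S \<and> (\<forall>s\<in>S. \<forall>t\<in>S. s * t \<in> S)"

definition localization_of :: "'k::field set \<Rightarrow> 'k set \<Rightarrow> bool" where
  "localization_of A B \<longleftrightarrow> (\<exists>S. mult_closed_nonzero A S \<and> B = {a / s | a s. a \<in> A \<and> s \<in> S})"

definition well_centered :: "'k::field set \<Rightarrow> 'k set \<Rightarrow> bool" where
  "well_centered A B \<longleftrightarrow> (\<forall>b\<in>B. \<exists>u\<in>units_of_ring B. u * b \<in> A)"

definition adjoin :: "'k::field set \<Rightarrow> 'k \<Rightarrow> 'k set" where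
  "adjoin A b = {x. \<exists>(n::nat) c. (\<forall>i<n. c i \<in> A) \<and> x = (\<Sum>i<n. c i * b ^ i)}"

end

theory Submission
  imports Defs
begin

text \<open>
  The ideal theory of a Dedekind domain \<open>A\<close> drives everything: every nonzero maximal ideal
  \<open>P\<close> satisfies \<open>P P\<^sup>-\<^sup>1 = A\<close>, and every nonzero ideal is a product of such ideals.

  (1) \<open>\<Rightarrow>\<close> (2): for \<open>b\<close> in an overring \<open>B\<close> let \<open>I = A + b A\<close> and \<open>J = I\<^sup>-\<^sup>1 \<subseteq> A\<close>.
  If \<open>J\<^sup>n = t A\<close>, then \<open>t b \<in> A\<close> and \<open>t\<^sup>-\<^sup>1 \<in> I\<^sup>n \<subseteq> B\<close>, so \<open>B\<close> is the localization of
  \<open>A\<close> at the elements of \<open>A\<close> that are invertible in \<open>B\<close>. The implications (2) \<open>\<Rightarrow>\<close> (3) \<open>\<Rightarrow>\<close> (4)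
  are formal. (4) \<open>\<Rightarrow>\<close> (1): suppose the class of a maximal ideal \<open>P\<close> has infinite order, and
  pick \<open>b \<in> P\<^sup>-\<^sup>1 - A\<close>. A unit \<open>u\<close> of \<open>A[b]\<close> and its inverse lie in \<open>(P\<^sup>N)\<^sup>-\<^sup>1\<close> for some \<open>N\<close>, so
  \<open>u P\<^sup>N\<close> is an ideal containing \<open>P\<^sup>2\<^sup>N\<close>. It is therefore a power of \<open>P\<close>, and because \<open>P\<close> has
  infinite order this forces \<open>u A = A\<close>. Hence \<open>A[b] \<noteq> A\<close> has no new units.
\<close>

definition submodule :: "'k::field set \<Rightarrow> 'k set \<Rightarrow> bool" where
  "submodule A M \<longleftrightarrow> 0 \<in> M \<and> (\<forall>x\<in>M. \<forall>y\<in>M. x + y \<in> M) \<and> (\<forall>a\<in>A. \<forall>x\<in>M. a * x \<in> M)"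

definition principal :: "'k::field set \<Rightarrow> 'k \<Rightarrow> 'k set" where
  "principal A x = {x * a | a. a \<in> A}"

definition inverse_ideal :: "'k::field set \<Rightarrow> 'k set \<Rightarrow> 'k set" where
  "inverse_ideal A I = {x. \<forall>i\<in>I. x * i \<in> A}"

definition ideal_insert :: "'k::field set \<Rightarrow> 'k set \<Rightarrow> 'k \<Rightarrow> 'k set" where
  "ideal_insert A I a = {i + a * r | i r. i \<in> I \<and> r \<in> A}"

definition torsion_ideal :: "'k::field set \<Rightarrow> 'k set \<Rightarrow> bool" where
  "torsion_ideal A I \<longleftrightarrow> (\<exists>n>0. \<exists>x. x \<noteq> 0 \<and> submod_pow A I n = principal A x)"

lemma ring_ideal_iff_submodule: "ring_ideal A I \<longleftrightarrow> submodule A I \<and> I \<subseteq> A"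
  unfolding ring_ideal_def submodule_def by auto

lemma subringD:
  assumes "subring R"
  shows "0 \<in> R" "1 \<in> R" "x \<in> R \<Longrightarrow> y \<in> R \<Longrightarrow> x + y \<in> R"
    "x \<in> R \<Longrightarrow> y \<in> R \<Longrightarrow> x - y \<in> R" "x \<in> R \<Longrightarrow> y \<in> R \<Longrightarrow> x * y \<in> R"
  using assms unfolding subring_def by auto

lemma ring_idealD:
  assumes "ring_ideal A I"
  shows "I \<subseteq> A" "0 \<in> I" "x \<in> I \<Longrightarrow> y \<in> I \<Longrightarrow> x + y \<in> I" "a \<in> A \<Longrightarrow> x \<in> I \<Longrightarrow> a * x \<in> I"
  using assms unfolding ring_ideal_def by auto

lemma maximal_idealD:
  assumes "maximal_ideal_of A M"
  shows "ring_ideal A M" "M \<noteq> A" "ring_ideal A J \<Longrightarrow> M \<subseteq> J \<Longrightarrow> J = M \<or> J = A"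
  using assms unfolding maximal_ideal_of_def by auto

lemma prime_idealD:
  assumes "prime_ideal_of A P"
  shows "ring_ideal A P" "P \<noteq> A" "a \<in> A \<Longrightarrow> b \<in> A \<Longrightarrow> a * b \<in> P \<Longrightarrow> a \<in> P \<or> b \<in> P"
  using assms unfolding prime_ideal_of_def by auto

lemma submoduleD:
  assumes "submodule A M"
  shows "0 \<in> M" "x \<in> M \<Longrightarrow> y \<in> M \<Longrightarrow> x + y \<in> M" "a \<in> A \<Longrightarrow> x \<in> M \<Longrightarrow> a * x \<in> M"
  using assms unfolding submodule_def by auto

lemma fractional_ideal_submodule: "fractional_ideal A I \<Longrightarrow> submodule A I"
  unfolding fractional_ideal_def submodule_def by blast

lemma principal_frac_iff: "principal_frac A I \<longleftrightarrow> (\<exists>x. x \<noteq> 0 \<and> I = principal A x)"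
  unfolding principal_frac_def principal_def by simp

lemma principal_one: "principal A 1 = A"
  unfolding principal_def by auto

lemma sum_closed:
  assumes "0 \<in> M" "\<And>x y. x \<in> M \<Longrightarrow> y \<in> M \<Longrightarrow> x + y \<in> M" "\<And>f. f \<in> F \<Longrightarrow> g f \<in> M"
  shows "sum g F \<in> M"
proof (cases "finite F")
  case True
  then show ?thesis using assms(3)
    by (induction F rule: finite_induct) (auto simp: assms(1,2))
qed (simp add: assms(1))

section \<open>Products of submodules\<close>

lemma submod_mult_least:
  assumes "0 \<in> M" "\<And>x y. x \<in> M \<Longrightarrow> y \<in> M \<Longrightarrow> x + y \<in> M"
    and "\<And>i j. i \<in> I \<Longrightarrow> j \<in> J \<Longrightarrow> i * j \<in> M"
  shows "submod_mult I J \<subseteq> M"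
proof
  fix x assume "x \<in> submod_mult I J"
  then obtain n :: nat and f g where fg: "\<forall>i<n. f i \<in> I \<and> g i \<in> J" and x: "x = (\<Sum>i<n. f i * g i)"
    unfolding submod_mult_def by blast
  show "x \<in> M" unfolding x by (rule sum_closed) (use assms fg in auto)
qed

lemma submod_mult_memI: "i \<in> I \<Longrightarrow> j \<in> J \<Longrightarrow> i * j \<in> submod_mult I J"
  unfolding submod_mult_def
  by (rule CollectI, rule exI[of _ 1], rule exI[of _ "\<lambda>_. i"], rule exI[of _ "\<lambda>_. j"]) auto

lemma zero_in_submod_mult: "0 \<in> submod_mult I J"
  unfolding submod_mult_def by (rule CollectI, rule exI[of _ 0]) auto

lemma submod_mult_add_prod:
  assumes "x \<in> submod_mult I J" "i \<in> I" "j \<in> J"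
  shows "x + i * j \<in> submod_mult I J"
proof -
  obtain n :: nat and f g where fg: "\<forall>k<n. f k \<in> I \<and> g k \<in> J" and x: "x = (\<Sum>k<n. f k * g k)"
    using assms(1) unfolding submod_mult_def by blast
  have "(\<Sum>k<Suc n. (f(n:=i)) k * (g(n:=j)) k) = x + i * j"
    using x by simp
  moreover have "\<forall>k<Suc n. (f(n:=i)) k \<in> I \<and> (g(n:=j)) k \<in> J" using fg assms by auto
  ultimately show ?thesis unfolding submod_mult_def
    by (intro CollectI exI[of _ "Suc n"] exI[of _ "f(n:=i)"] exI[of _ "g(n:=j)"] conjI) simp_all
qed

lemma submod_mult_add:
  assumes "x \<in> submod_mult I J" "y \<in> submod_mult I J"
  shows "x + y \<in> submod_mult I J"
proof -
  obtain n :: nat and f g where fg: "\<forall>k<n. f k \<in> I \<and> g k \<in> J" and y: "y = (\<Sum>k<n. f k * g k)"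
    using assms(2) unfolding submod_mult_def by blast
  have "x + (\<Sum>k<m. f k * g k) \<in> submod_mult I J" if "m \<le> n" for m
    using that
  proof (induction m)
    case (Suc m)
    then have "x + (\<Sum>k<m. f k * g k) + f m * g m \<in> submod_mult I J"
      using fg by (intro submod_mult_add_prod) auto
    then show ?case by (simp add: add.assoc)
  qed (simp add: assms(1))
  then show ?thesis using y by auto
qed

lemma submod_mult_comm: "submod_mult I J = submod_mult J I"
proof -
  have *: "submod_mult X Y \<subseteq> submod_mult Y X" for X Y :: "'a::field set"
  proof (rule submod_mult_least)
    show "i * j \<in> submod_mult Y X" if "i \<in> X" "j \<in> Y" for i j
      using submod_mult_memI[OF that(2,1)] by (simp add: mult.commute)
  qed (auto simp: zero_in_submod_mult submod_mult_add)
  show ?thesis using *[of I J] *[of J I] by auto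
qed

lemma submod_mult_assoc: "submod_mult (submod_mult I J) L = submod_mult I (submod_mult J L)"
proof -
  have le: "submod_mult (submod_mult X Y) Z \<subseteq> submod_mult X (submod_mult Y Z)"
    for X Y Z :: "'a::field set"
  proof -
    let ?R = "submod_mult X (submod_mult Y Z)"
    have "submod_mult X Y \<subseteq> {x. \<forall>z\<in>Z. x * z \<in> ?R}"
      by (rule submod_mult_least)
        (auto simp: zero_in_submod_mult distrib_right submod_mult_add mult.assoc
          intro!: submod_mult_memI)
    then show ?thesis
      by (intro submod_mult_least) (auto simp: zero_in_submod_mult submod_mult_add)
  qed
  have "submod_mult I (submod_mult J L) = submod_mult (submod_mult L J) I"
    by (simp add: submod_mult_comm)
  also have "\<dots> \<subseteq> submod_mult L (submod_mult J I)" by (rule le)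
  also have "\<dots> = submod_mult (submod_mult I J) L" by (simp add: submod_mult_comm)
  finally show ?thesis using le by blast
qed

lemma submod_mult_left_commute:
  "submod_mult I (submod_mult J L) = submod_mult J (submod_mult I L)"
  by (metis submod_mult_assoc submod_mult_comm)

lemma submod_mult_mono: "I \<subseteq> I' \<Longrightarrow> J \<subseteq> J' \<Longrightarrow> submod_mult I J \<subseteq> submod_mult I' J'"
  by (rule submod_mult_least) (auto simp: zero_in_submod_mult submod_mult_add intro: submod_mult_memI)

lemma submod_mult_subset_subring:
  assumes "subring B" "I \<subseteq> B" "J \<subseteq> B"
  shows "submod_mult I J \<subseteq> B"
  by (rule submod_mult_least) (use assms in \<open>auto simp: subring_def\<close>)

lemma submodule_submod_mult: "submodule A I \<Longrightarrow> submodule A (submod_mult I J)"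
proof -
  assume I: "submodule A I"
  have "submod_mult I J \<subseteq> {x. a * x \<in> submod_mult I J}" if "a \<in> A" for a
    by (rule submod_mult_least) (use I that in \<open>auto simp: zero_in_submod_mult distrib_left
        submod_mult_add submoduleD mult.assoc[symmetric] intro!: submod_mult_memI\<close>)
  then show ?thesis unfolding submodule_def by (auto simp: zero_in_submod_mult submod_mult_add)
qed

lemma submodule_submod_mult2: "submodule A J \<Longrightarrow> submodule A (submod_mult I J)"
  by (subst submod_mult_comm) (rule submodule_submod_mult)

lemma submodule_subring: "subring B \<Longrightarrow> A \<subseteq> B \<Longrightarrow> submodule A B"
  unfolding submodule_def subring_def by blast

lemma prime_ideal_submod_mult:
  assumes P: "prime_ideal_of A P" and "I \<subseteq> A" "J \<subseteq> A" and IJ: "submod_mult I J \<subseteq> P"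
  shows "I \<subseteq> P \<or> J \<subseteq> P"
proof (rule disjCI)
  assume "\<not> J \<subseteq> P"
  then obtain j where j: "j \<in> J" "j \<notin> P" by auto
  show "I \<subseteq> P"
  proof
    fix i assume "i \<in> I"
    then have "i * j \<in> P" using IJ j submod_mult_memI by blast
    then show "i \<in> P" using P j \<open>i \<in> I\<close> assms(2,3) unfolding prime_ideal_of_def by auto
  qed
qed

section \<open>Ideal arithmetic in a subring of a field\<close>

locale field_subring =
  fixes A :: "'k::field set"
  assumes subring: "subring A"
begin

lemmas zero_mem = subringD(1)[OF subring]
  and one_mem = subringD(2)[OF subring]
  and add_mem = subringD(3)[OF subring]
  and mult_mem = subringD(5)[OF subring]

lemma uminus_mem: "x \<in> A \<Longrightarrow> - x \<in> A"
  using subringD(4)[OF subring zero_mem] by simp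

lemma submodule_ring: "submodule A A"
  unfolding submodule_def by (auto simp: zero_mem add_mem mult_mem)

lemma ring_ideal_ring: "ring_ideal A A"
  by (simp add: ring_ideal_iff_submodule submodule_ring)

lemma submod_mult_ring_left: "submodule A I \<Longrightarrow> submod_mult A I = I"
proof
  assume I: "submodule A I"
  show "submod_mult A I \<subseteq> I" by (rule submod_mult_least) (use I in \<open>auto simp: submoduleD\<close>)
  show "I \<subseteq> submod_mult A I" using submod_mult_memI[OF one_mem, of _ I] by fastforce
qed

lemma submod_mult_ring_right: "submodule A I \<Longrightarrow> submod_mult I A = I"
  by (subst submod_mult_comm) (rule submod_mult_ring_left)

lemma submod_mult_subset_left: "submodule A I \<Longrightarrow> J \<subseteq> A \<Longrightarrow> submod_mult I J \<subseteq> I"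
  using submod_mult_mono[of I I J A] submod_mult_ring_right by auto

lemma ring_ideal_submod_mult: "ring_ideal A I \<Longrightarrow> J \<subseteq> A \<Longrightarrow> ring_ideal A (submod_mult I J)"
  unfolding ring_ideal_iff_submodule using submodule_submod_mult submod_mult_subset_left by blast

lemma submodule_principal: "submodule A (principal A x)"
  unfolding submodule_def principal_def
proof (intro conjI ballI)
  show "0 \<in> {x * a |a. a \<in> A}" using zero_mem by force
  fix u v assume "u \<in> {x * a |a. a \<in> A}" "v \<in> {x * a |a. a \<in> A}"
  then obtain a b where "a \<in> A" "b \<in> A" "u = x * a" "v = x * b" by blast
  then show "u + v \<in> {x * a |a. a \<in> A}"
    by (intro CollectI exI[of _ "a + b"]) (simp add: distrib_left add_mem)
next
  fix c u assume "c \<in> A" "u \<in> {x * a |a. a \<in> A}"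
  then obtain a where "a \<in> A" "u = x * a" by blast
  then show "c * u \<in> {x * a |a. a \<in> A}"
    using \<open>c \<in> A\<close> by (intro CollectI exI[of _ "c * a"]) (simp add: mult.left_commute mult_mem)
qed

lemma ring_ideal_principal: "a \<in> A \<Longrightarrow> ring_ideal A (principal A a)"
  unfolding ring_ideal_iff_submodule using submodule_principal
  by (auto simp: principal_def mult_mem)

lemma self_in_principal: "x \<in> principal A x"
  unfolding principal_def using one_mem by force

lemma submod_mult_principal:
  assumes "submodule A I"
  shows "submod_mult (principal A x) I = (\<lambda>y. x * y) ` I"
proof
  show "submod_mult (principal A x) I \<subseteq> (\<lambda>y. x * y) ` I"
  proof (rule submod_mult_least)
    show "0 \<in> (*) x ` I" using submoduleD(1)[OF assms] by (metis image_eqI mult_zero_right)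
    show "u + v \<in> (*) x ` I" if "u \<in> (*) x ` I" "v \<in> (*) x ` I" for u v
      using that submoduleD(2)[OF assms] by (auto simp: distrib_left[symmetric])
    show "i * j \<in> (*) x ` I" if "i \<in> principal A x" "j \<in> I" for i j
      using that submoduleD(3)[OF assms] unfolding principal_def by (auto simp: mult.assoc)
  qed
  show "(\<lambda>y. x * y) ` I \<subseteq> submod_mult (principal A x) I"
    using submod_mult_memI[OF self_in_principal] by blast
qed

lemma principal_mult: "submod_mult (principal A x) (principal A y) = principal A (x * y)"
  by (simp add: submod_mult_principal submodule_principal) (auto simp: principal_def mult.assoc)

lemma principal_eq_ring_imp_unit: "principal A x = A \<Longrightarrow> x \<noteq> 0 \<Longrightarrow> x \<in> units_of_ring A"
proof -
  assume x: "principal A x = A" "x \<noteq> 0"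
  then obtain a where "a \<in> A" "1 = x * a" using one_mem unfolding principal_def by blast
  then have "inverse x = a" using x(2) by (simp add: field_simps)
  then have "inverse x \<in> A" using \<open>a \<in> A\<close> by simp
  then show ?thesis using x self_in_principal[of x] unfolding units_of_ring_def by auto
qed

lemma submodule_inverse_ideal: "submodule A (inverse_ideal A I)"
  unfolding submodule_def inverse_ideal_def
  by (auto simp: zero_mem add_mem mult_mem distrib_right mult.assoc)

lemma one_in_inverse_ideal: "I \<subseteq> A \<Longrightarrow> 1 \<in> inverse_ideal A I"
  unfolding inverse_ideal_def by auto

lemma submod_mult_inverse_ideal_subset: "submod_mult I (inverse_ideal A I) \<subseteq> A"
  by (rule submod_mult_least) (auto simp: zero_mem add_mem inverse_ideal_def mult.commute)

lemma div_in_inverse_ideal: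
  assumes a: "a \<noteq> 0" and PY: "submod_mult P Y \<subseteq> principal A a"
    and b: "b \<in> Y" "b \<notin> principal A a"
  shows "b / a \<in> inverse_ideal A P" "b / a \<notin> A"
proof -
  show "b / a \<in> inverse_ideal A P"
    unfolding inverse_ideal_def
  proof (intro CollectI ballI)
    fix p assume "p \<in> P"
    then have "p * b \<in> principal A a" using PY b(1) submod_mult_memI by blast
    then obtain r where "r \<in> A" "p * b = a * r" unfolding principal_def by blast
    then show "b / a * p \<in> A" using a by (auto simp: field_simps)
  qed
  show "b / a \<notin> A"
  proof
    assume "b / a \<in> A"
    then have "a * (b / a) \<in> principal A a" unfolding principal_def by blast
    then show False using b(2) a by simp
  qed
qed

lemma invertible_imp_mult_inverse_ideal:
  assumes "submod_mult I J = A"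
  shows "submod_mult I (inverse_ideal A I) = A"
proof -
  have "J \<subseteq> inverse_ideal A I"
  proof
    fix y assume "y \<in> J"
    then have "i * y \<in> A" if "i \<in> I" for i using that assms submod_mult_memI by blast
    then show "y \<in> inverse_ideal A I" unfolding inverse_ideal_def by (simp add: mult.commute)
  qed
  then have "A \<subseteq> submod_mult I (inverse_ideal A I)" using assms submod_mult_mono by blast
  then show ?thesis using submod_mult_inverse_ideal_subset by blast
qed

lemma submod_mult_cancel_right:
  assumes inv: "submod_mult I J = A" and "submodule A X" "submodule A Y"
    and eq: "submod_mult X I = submod_mult Y I"
  shows "X = Y"
proof -
  have "X = submod_mult (submod_mult X I) J"
    by (simp add: submod_mult_assoc inv submod_mult_ring_right assms(2))
  also have "\<dots> = Y"
    by (simp add: eq submod_mult_assoc inv submod_mult_ring_right assms(3))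
  finally show ?thesis .
qed

lemma submodule_submod_pow: "submodule A I \<Longrightarrow> submodule A (submod_pow A I n)"
  by (induction n) (auto simp: submodule_ring submodule_submod_mult)

lemma submod_pow_add:
  "submodule A I \<Longrightarrow> submod_pow A I (m + n) = submod_mult (submod_pow A I m) (submod_pow A I n)"
  by (induction m) (simp_all add: submod_mult_ring_left submodule_submod_pow submod_mult_assoc)

lemma submod_pow_mult:
  "submodule A I \<Longrightarrow> submod_pow A I (m * k) = submod_pow A (submod_pow A I m) k"
  by (induction k) (simp_all add: submod_pow_add)

lemma submod_pow_submod_mult:
  "submodule A I \<Longrightarrow> submodule A J \<Longrightarrow>
    submod_pow A (submod_mult I J) n = submod_mult (submod_pow A I n) (submod_pow A J n)"
  by (induction n)
    (simp_all add: submod_mult_ring_left submodule_ring submod_mult_assoc submod_mult_left_commute)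

lemma submod_pow_principal: "submod_pow A (principal A x) n = principal A (x ^ n)"
  by (induction n) (simp_all add: principal_one principal_mult)

lemma submod_pow_ring: "submod_pow A A n = A"
  by (induction n) (simp_all add: submod_mult_ring_left submodule_ring)

lemma submod_pow_subset: "submodule A I \<Longrightarrow> I \<subseteq> A \<Longrightarrow> submod_pow A I n \<subseteq> A"
  by (induction n) (auto dest: submod_mult_subset_left)

lemma submod_pow_subset_self:
  "submodule A I \<Longrightarrow> I \<subseteq> A \<Longrightarrow> n > 0 \<Longrightarrow> submod_pow A I n \<subseteq> I"
  by (cases n) (auto dest: submod_mult_subset_left[OF _ submod_pow_subset])

lemma power_in_submod_pow: "p \<in> P \<Longrightarrow> p ^ k \<in> submod_pow A P k"
  by (induction k) (simp_all add: one_mem submod_mult_memI)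

lemma submod_pow_subset_subring:
  "subring B \<Longrightarrow> A \<subseteq> B \<Longrightarrow> I \<subseteq> B \<Longrightarrow> submod_pow A I n \<subseteq> B"
  by (induction n) (auto dest: submod_mult_subset_subring)

lemma submod_pow_invertible:
  "submodule A I \<Longrightarrow> submodule A J \<Longrightarrow> submod_mult I J = A \<Longrightarrow>
    submod_mult (submod_pow A I n) (submod_pow A J n) = A"
  by (simp add: submod_pow_submod_mult[symmetric] submod_pow_ring)

lemma torsion_ideal_ring: "torsion_ideal A A"
  unfolding torsion_ideal_def
  by (intro exI[of _ 1] conjI exI[of _ 1]) (simp_all add: principal_one submod_mult_ring_left submodule_ring)

lemma torsion_ideal_submod_mult:
  assumes X: "submodule A X" "torsion_ideal A X" and Y: "submodule A Y" "torsion_ideal A Y"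
  shows "torsion_ideal A (submod_mult X Y)"
proof -
  obtain m x where m: "m > 0" "x \<noteq> 0" "submod_pow A X m = principal A x"
    using X(2) unfolding torsion_ideal_def by blast
  obtain k y where k: "k > 0" "y \<noteq> 0" "submod_pow A Y k = principal A y"
    using Y(2) unfolding torsion_ideal_def by blast
  have "submod_pow A (submod_mult X Y) (m * k)
      = submod_mult (submod_pow A X (m * k)) (submod_pow A Y (k * m))"
    using submod_pow_submod_mult[OF X(1) Y(1)] by (simp add: mult.commute)
  also have "\<dots> = principal A (x ^ k * y ^ m)"
    using submod_pow_mult[OF X(1), of m k] submod_pow_mult[OF Y(1), of k m] m(3) k(3)
    by (simp add: submod_pow_principal principal_mult)
  finally show ?thesis unfolding torsion_ideal_def
    by (intro exI[of _ "m * k"] conjI exI[of _ "x ^ k * y ^ m"]) (use m k in auto)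
qed

lemma torsion_ideal_principal_multD:
  assumes I: "submodule A I" and x: "x \<noteq> 0" and tors: "torsion_ideal A (submod_mult (principal A x) I)"
  shows "torsion_ideal A I"
proof -
  obtain n y where n: "n > 0" "y \<noteq> 0"
    and eq: "submod_pow A (submod_mult (principal A x) I) n = principal A y"
    using tors unfolding torsion_ideal_def by blast
  have "submod_pow A I n = submod_mult (principal A (inverse (x ^ n) * x ^ n)) (submod_pow A I n)"
    using x by (simp add: principal_one submod_mult_ring_left submodule_submod_pow I)
  also have "\<dots> = submod_mult (principal A (inverse (x ^ n)))
      (submod_mult (submod_pow A (principal A x) n) (submod_pow A I n))"
    by (simp only: principal_mult[symmetric] submod_mult_assoc submod_pow_principal)
  also have "\<dots> = submod_mult (principal A (inverse (x ^ n))) (principal A y)"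
    by (simp only: submod_pow_submod_mult[OF submodule_principal I, symmetric] eq)
  also have "\<dots> = principal A (inverse (x ^ n) * y)" by (rule principal_mult)
  finally show ?thesis unfolding torsion_ideal_def
    by (intro exI[of _ n] conjI exI[of _ "inverse (x ^ n) * y"]) (use n x in auto)
qed

lemma principal_mult_pow_eq_pow:
  assumes P: "submodule A P" "submod_mult P Q = A" "submodule A Q" and nt: "\<not> torsion_ideal A P"
    and x: "x \<noteq> 0" and eq: "submod_mult (principal A x) (submod_pow A P a) = submod_pow A P b"
  shows "a = b"
proof (rule ccontr)
  assume "a \<noteq> b"
  have powP: "submodule A (submod_pow A P k)" for k by (rule submodule_submod_pow[OF P(1)])
  have inv: "submod_mult (submod_pow A P k) (submod_pow A Q k) = A" for k
    by (rule submod_pow_invertible[OF P(1,3,2)])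
  show False
  proof (cases "a < b")
    case True
    have "submod_mult (principal A x) (submod_pow A P a)
        = submod_mult (submod_pow A P (b - a)) (submod_pow A P a)"
      using eq True submod_pow_add[OF P(1), of "b - a" a] by simp
    then have "principal A x = submod_pow A P (b - a)"
      by (rule submod_mult_cancel_right[OF inv submodule_principal powP])
    then show False using nt x True unfolding torsion_ideal_def by (metis zero_less_diff)
  next
    case False
    then have "b < a" using \<open>a \<noteq> b\<close> by simp
    have "submod_mult (submod_mult (principal A x) (submod_pow A P (a - b))) (submod_pow A P b)
        = submod_mult A (submod_pow A P b)"
      using eq \<open>b < a\<close> submod_pow_add[OF P(1), of "a - b" b]
      by (simp add: submod_mult_assoc submod_mult_ring_left powP)
    then have "submod_mult (principal A x) (submod_pow A P (a - b)) = A"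
      by (rule submod_mult_cancel_right[OF inv submodule_submod_mult[OF submodule_principal]
            submodule_ring])
    have "submod_pow A P (a - b) = submod_mult (principal A (inverse x * x)) (submod_pow A P (a - b))"
      using x by (simp add: principal_one submod_mult_ring_left powP)
    also have "\<dots>
        = submod_mult (principal A (inverse x)) (submod_mult (principal A x) (submod_pow A P (a - b)))"
      by (simp only: principal_mult[symmetric] submod_mult_assoc)
    also have "\<dots> = principal A (inverse x)"
      using \<open>submod_mult (principal A x) (submod_pow A P (a - b)) = A\<close>
      by (simp add: submod_mult_ring_right submodule_principal)
    finally have "submod_pow A P (a - b) = principal A (inverse x)" .
    then show False using nt x \<open>b < a\<close> unfolding torsion_ideal_def
      by (metis zero_less_diff inverse_nonzero_iff_nonzero)
  qed
qed

lemma ideal_insert_submodule: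
  assumes "submodule A I"
  shows "submodule A (ideal_insert A I a)" "I \<subseteq> ideal_insert A I a" "a \<in> ideal_insert A I a"
proof -
  note I = submoduleD[OF assms]
  show "submodule A (ideal_insert A I a)"
    unfolding submodule_def ideal_insert_def
  proof (intro conjI ballI)
    show "0 \<in> {i + a * r |i r. i \<in> I \<and> r \<in> A}"
      using I(1) zero_mem by (intro CollectI exI[of _ 0]) auto
    fix x y assume "x \<in> {i + a * r |i r. i \<in> I \<and> r \<in> A}" "y \<in> {i + a * r |i r. i \<in> I \<and> r \<in> A}"
    then obtain i r i' r' where "i \<in> I" "r \<in> A" "i' \<in> I" "r' \<in> A" "x = i + a * r" "y = i' + a * r'"
      by blast
    then show "x + y \<in> {i + a * r |i r. i \<in> I \<and> r \<in> A}"
      by (intro CollectI exI[of _ "i + i'"] exI[of _ "r + r'"]) (auto simp: I add_mem algebra_simps)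
  next
    fix c x assume "c \<in> A" "x \<in> {i + a * r |i r. i \<in> I \<and> r \<in> A}"
    then obtain i r where "i \<in> I" "r \<in> A" "x = i + a * r" by blast
    then show "c * x \<in> {i + a * r |i r. i \<in> I \<and> r \<in> A}"
      using \<open>c \<in> A\<close> by (intro CollectI exI[of _ "c * i"] exI[of _ "c * r"])
        (auto simp: I mult_mem algebra_simps)
  qed
  show "I \<subseteq> ideal_insert A I a"
    unfolding ideal_insert_def using zero_mem by force
  show "a \<in> ideal_insert A I a"
    unfolding ideal_insert_def using one_mem I(1) by force
qed

lemma ring_ideal_ideal_insert:
  assumes "ring_ideal A I" "a \<in> A"
  shows "ring_ideal A (ideal_insert A I a)"
proof -
  have I: "submodule A I" "I \<subseteq> A" using assms(1) by (simp_all add: ring_ideal_iff_submodule)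
  moreover have "ideal_insert A I a \<subseteq> A"
    using I(2) assms(2) by (auto simp: ideal_insert_def add_mem mult_mem)
  ultimately show ?thesis using ideal_insert_submodule(1) by (simp add: ring_ideal_iff_submodule)
qed

lemma submod_mult_ideal_insert_subset:
  assumes I: "ring_ideal A I" and ab: "a \<in> A" "b \<in> A" "a * b \<in> I"
  shows "submod_mult (ideal_insert A I a) (ideal_insert A I b) \<subseteq> I"
proof (rule submod_mult_least)
  note I' = submoduleD[of A I] I[unfolded ring_ideal_iff_submodule]
  show "0 \<in> I" "\<And>x y. x \<in> I \<Longrightarrow> y \<in> I \<Longrightarrow> x + y \<in> I" using I' by auto
  fix u v assume "u \<in> ideal_insert A I a" "v \<in> ideal_insert A I b"
  then obtain i r i' s where h: "i \<in> I" "r \<in> A" "u = i + a * r" "i' \<in> I" "s \<in> A" "v = i' + b * s"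
    unfolding ideal_insert_def by blast
  have "v \<in> A" using h ab I' by (auto simp: add_mem mult_mem)
  have "u * v = v * i + (a * r) * i' + (r * s) * (a * b)" using h by (simp add: algebra_simps)
  moreover have "v * i \<in> I" "(a * r) * i' \<in> I" "(r * s) * (a * b) \<in> I"
    using I' h ab \<open>v \<in> A\<close> by (auto simp: mult_mem)
  ultimately show "u * v \<in> I" using I' by auto
qed

lemma maximal_imp_prime:
  assumes M: "maximal_ideal_of A M"
  shows "prime_ideal_of A M"
  unfolding prime_ideal_of_def
proof (intro conjI ballI impI)
  show I: "ring_ideal A M" "M \<noteq> A" by (rule maximal_idealD[OF M])+
  fix a b assume ab: "a \<in> A" "b \<in> A" "a * b \<in> M"
  show "a \<in> M \<or> b \<in> M"
  proof (cases "a \<in> M")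
    case False
    have "ring_ideal A (ideal_insert A M a)" by (rule ring_ideal_ideal_insert[OF I(1) ab(1)])
    moreover have "M \<subseteq> ideal_insert A M a" "a \<in> ideal_insert A M a"
      using ideal_insert_submodule I(1) by (auto simp: ring_ideal_iff_submodule)
    ultimately have "ideal_insert A M a = A"
      using maximal_idealD(3)[OF M] \<open>a \<notin> M\<close> by blast
    then have "1 \<in> ideal_insert A M a" using one_mem by simp
    then obtain i r where ir: "i \<in> M" "r \<in> A" "1 = i + a * r" unfolding ideal_insert_def by blast
    have "b * i + r * (a * b) = b * (i + a * r)" by (simp add: algebra_simps)
    also have "\<dots> = b" using ir(3) by simp
    finally have eq: "b * i + r * (a * b) = b" .
    have "b * i + r * (a * b) \<in> M"
      using ring_idealD(3,4)[OF I(1)] ir ab by blast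
    then show ?thesis using eq by simp
  qed simp
qed

lemma submod_pow_subset_prime:
  assumes Q: "prime_ideal_of A Q" and P: "ring_ideal A P"
    and k: "k > 0" "submod_pow A P k \<subseteq> Q"
  shows "P \<subseteq> Q"
  using k
proof (induction k)
  case (Suc k)
  have PA: "P \<subseteq> A" "submodule A P" using P by (auto simp: ring_ideal_iff_submodule)
  have "P \<subseteq> Q \<or> submod_pow A P k \<subseteq> Q"
    by (rule prime_ideal_submod_mult[OF Q PA(1) submod_pow_subset[OF PA(2,1)]]) (use Suc in simp)
  show ?case
  proof (cases k)
    case 0
    then have "P \<subseteq> Q \<or> A \<subseteq> Q" using \<open>P \<subseteq> Q \<or> submod_pow A P k \<subseteq> Q\<close> by simp
    then show ?thesis using prime_idealD(1,2)[OF Q] ring_idealD(1) by blast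
  next
    case (Suc k')
    then show ?thesis using Suc.IH \<open>P \<subseteq> Q \<or> submod_pow A P k \<subseteq> Q\<close> by blast
  qed
qed simp

lemma fractional_ideal_scaled:
  assumes I: "fractional_ideal A I"
  obtains d where "d \<noteq> 0" "ring_ideal A (submod_mult (principal A d) I)"
    "submod_mult (principal A d) I \<noteq> {0}"
proof -
  obtain d where d: "d \<in> A" "d \<noteq> 0" "\<forall>x\<in>I. d * x \<in> A"
    using I unfolding fractional_ideal_def by blast
  have Im: "submodule A I" using I by (rule fractional_ideal_submodule)
  have dI: "submod_mult (principal A d) I = (\<lambda>y. d * y) ` I" by (rule submod_mult_principal[OF Im])
  have "submodule A (submod_mult (principal A d) I)" by (rule submodule_submod_mult2[OF Im])
  moreover have "submod_mult (principal A d) I \<subseteq> A" using d(3) dI by auto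
  moreover obtain y where "y \<in> I" "y \<noteq> 0"
    using I submoduleD(1)[OF Im] unfolding fractional_ideal_def by blast
  then have "d * y \<in> submod_mult (principal A d) I" "d * y \<noteq> 0" using d(2) dI by auto
  then have "submod_mult (principal A d) I \<noteq> {0}" by blast
  ultimately show ?thesis using that d(2) by (simp add: ring_ideal_iff_submodule)
qed

lemma inverse_ideal_fractional:
  assumes inv: "submod_mult I (inverse_ideal A I) = A" and one: "1 \<in> I"
  shows "inverse_ideal A I \<subseteq> A" "fractional_ideal A (inverse_ideal A I)"
proof -
  show sub: "inverse_ideal A I \<subseteq> A" using one unfolding inverse_ideal_def by force
  have "inverse_ideal A I \<noteq> {0}"
  proof
    assume "inverse_ideal A I = {0}"
    then have "submod_mult I (inverse_ideal A I) \<subseteq> {0}" by (intro submod_mult_least) auto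
    then show False using inv one_mem by auto
  qed
  then show "fractional_ideal A (inverse_ideal A I)"
    using submodule_inverse_ideal[of I] sub one_mem unfolding fractional_ideal_def submodule_def
    by force
qed

lemma inverse_in_submod_pow:
  assumes "submodule A I" "submodule A J" "submod_mult I J = A"
    and t: "t \<noteq> 0" "submod_pow A J n = principal A t"
  shows "inverse t \<in> submod_pow A I n"
proof -
  have "A = submod_mult (principal A t) (submod_pow A I n)"
    using submod_pow_invertible[OF assms(1-3), of n] t(2) by (simp add: submod_mult_comm)
  also have "\<dots> = (\<lambda>y. t * y) ` submod_pow A I n"
    by (rule submod_mult_principal[OF submodule_submod_pow[OF assms(1)]])
  finally have "1 \<in> (\<lambda>y. t * y) ` submod_pow A I n" using one_mem by (rule subst)
  then obtain z where "z \<in> submod_pow A I n" "t * z = 1" by auto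
  moreover have "inverse t = z" using \<open>t * z = 1\<close> t(1) by (simp add: field_simps)
  ultimately show ?thesis by simp
qed

lemma principal_mult_pow_ideal:
  assumes P: "ring_ideal A P" and u: "u \<noteq> 0"
    and uN: "u \<in> inverse_ideal A (submod_pow A P N)" "inverse u \<in> inverse_ideal A (submod_pow A P N)"
  shows "ring_ideal A (submod_mult (principal A u) (submod_pow A P N))"
    "submod_pow A P (N + N) \<subseteq> submod_mult (principal A u) (submod_pow A P N)"
proof -
  have Pm: "submodule A P" using P by (simp add: ring_ideal_iff_submodule)
  have powP: "submodule A (submod_pow A P N)" by (rule submodule_submod_pow[OF Pm])
  define L where "L = submod_mult (principal A u) (submod_pow A P N)"
  have L: "L = (\<lambda>y. u * y) ` submod_pow A P N"
    unfolding L_def by (rule submod_mult_principal[OF powP])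
  have "L \<subseteq> A" using uN(1) unfolding L inverse_ideal_def by auto
  then show ideal: "ring_ideal A L"
    unfolding L_def using submodule_submod_mult2[OF powP] by (simp add: ring_ideal_iff_submodule)
  show "submod_pow A P (N + N) \<subseteq> L"
    unfolding submod_pow_add[OF Pm]
  proof (rule submod_mult_least)
    show "0 \<in> L" "\<And>x y. x \<in> L \<Longrightarrow> y \<in> L \<Longrightarrow> x + y \<in> L" using ring_idealD[OF ideal] by auto
    fix p q assume pq: "p \<in> submod_pow A P N" "q \<in> submod_pow A P N"
    have "inverse u * p * q \<in> submod_pow A P N"
      using uN(2) pq submoduleD(3)[OF powP] unfolding inverse_ideal_def by blast
    moreover have "p * q = u * (inverse u * p * q)" using u by (simp add: field_simps)
    ultimately show "p * q \<in> L" unfolding L by blast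
  qed
qed

lemma localization_ofI:
  assumes B: "overring A B" and denom: "\<And>b. b \<in> B \<Longrightarrow> \<exists>t\<in>A. t \<noteq> 0 \<and> inverse t \<in> B \<and> t * b \<in> A"
  shows "localization_of A B"
proof -
  have SB: "subring B" "A \<subseteq> B" using B unfolding overring_def by auto
  define T where "T = {s \<in> A. s \<noteq> 0 \<and> inverse s \<in> B}"
  have "mult_closed_nonzero A T"
    unfolding mult_closed_nonzero_def T_def using SB one_mem
    by (auto simp: mult_mem subring_def inverse_mult_distrib)
  moreover have "B = {a / s | a s. a \<in> A \<and> s \<in> T}"
  proof
    show "{a / s | a s. a \<in> A \<and> s \<in> T} \<subseteq> B"
      using SB unfolding T_def subring_def by (auto simp: divide_inverse)
    show "B \<subseteq> {a / s | a s. a \<in> A \<and> s \<in> T}"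
    proof
      fix b assume "b \<in> B"
      then obtain t where t: "t \<in> A" "t \<noteq> 0" "inverse t \<in> B" "t * b \<in> A" using denom by blast
      then have "b = (t * b) / t" by simp
      then show "b \<in> {a / s | a s. a \<in> A \<and> s \<in> T}" using t unfolding T_def by blast
    qed
  qed
  ultimately show ?thesis unfolding localization_of_def by blast
qed

lemma localization_imp_well_centered:
  assumes B: "overring A B" and loc: "localization_of A B"
  shows "well_centered A B"
  unfolding well_centered_def
proof
  fix b assume "b \<in> B"
  obtain T where T: "mult_closed_nonzero A T" "B = {a / s | a s. a \<in> A \<and> s \<in> T}"
    using loc unfolding localization_of_def by blast
  obtain a s where as: "a \<in> A" "s \<in> T" "b = a / s" using \<open>b \<in> B\<close> T(2) by blast
  have s: "s \<in> A" "s \<noteq> 0" using as(2) T(1) unfolding mult_closed_nonzero_def by auto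
  have "inverse s = 1 / s" by (simp add: divide_inverse)
  then have "inverse s \<in> B" using T(2) as(2) one_mem by blast
  then have "s \<in> units_of_ring B" using s B unfolding units_of_ring_def overring_def by auto
  moreover have "s * b \<in> A" using as s by simp
  ultimately show "\<exists>u\<in>units_of_ring B. u * b \<in> A" by blast
qed

lemma well_centered_same_units_eq:
  assumes B: "overring A B" "well_centered A B" and units: "units_of_ring B = units_of_ring A"
  shows "B = A"
proof
  show "B \<subseteq> A"
  proof
    fix x assume "x \<in> B"
    then obtain u where u: "u \<in> units_of_ring B" "u * x \<in> A"
      using B(2) unfolding well_centered_def by blast
    then have "u \<noteq> 0" "inverse u \<in> A" using units unfolding units_of_ring_def by auto
    then have "inverse u * (u * x) \<in> A" using u(2) mult_mem by blast
    then show "x \<in> A" using \<open>u \<noteq> 0\<close> by (simp add: mult.assoc[symmetric])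
  qed
  show "A \<subseteq> B" using B(1) unfolding overring_def by blast
qed

end

section \<open>Polynomial expressions in one element\<close>

text \<open>The elements of \<open>A[x]\<close> given by polynomials of degree \<open>< n\<close>, in Horner form.\<close>
fun adjoin_upto :: "'k::field set \<Rightarrow> 'k \<Rightarrow> nat \<Rightarrow> 'k set" where
  "adjoin_upto A x 0 = {0}"
| "adjoin_upto A x (Suc n) = {a + x * y | a y. a \<in> A \<and> y \<in> adjoin_upto A x n}"

declare adjoin_upto.simps(2)[simp del]

lemma adjoin_upto_SucI: "a \<in> A \<Longrightarrow> y \<in> adjoin_upto A x n \<Longrightarrow> a + x * y \<in> adjoin_upto A x (Suc n)"
  by (auto simp: adjoin_upto.simps(2))

lemma adjoin_upto_SucE:
  assumes "y \<in> adjoin_upto A x (Suc n)"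
  obtains a y' where "a \<in> A" "y' \<in> adjoin_upto A x n" "y = a + x * y'"
  using assms by (auto simp: adjoin_upto.simps(2))

context field_subring
begin

lemma zero_in_adjoin_upto: "0 \<in> adjoin_upto A x n"
  by (induction n) (auto dest: adjoin_upto_SucI[OF zero_mem])

lemma adjoin_upto_mono: "m \<le> n \<Longrightarrow> adjoin_upto A x m \<subseteq> adjoin_upto A x n"
proof -
  have "adjoin_upto A x n \<subseteq> adjoin_upto A x (Suc n)" for n
  proof (induction n)
    case 0 then show ?case using adjoin_upto_SucI[OF zero_mem, of 0 x 0] by simp
  next
    case (Suc n) then show ?case by (blast elim: adjoin_upto_SucE intro: adjoin_upto_SucI)
  qed
  then show "m \<le> n \<Longrightarrow> adjoin_upto A x m \<subseteq> adjoin_upto A x n"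
    using lift_Suc_mono_le[of "adjoin_upto A x"] by blast
qed

lemma adjoin_upto_add:
  "y \<in> adjoin_upto A x n \<Longrightarrow> z \<in> adjoin_upto A x n \<Longrightarrow> y + z \<in> adjoin_upto A x n"
proof (induction n arbitrary: y z)
  case (Suc n)
  obtain a y' where "a \<in> A" "y' \<in> adjoin_upto A x n" "y = a + x * y'"
    using Suc.prems(1) by (rule adjoin_upto_SucE)
  moreover obtain b z' where "b \<in> A" "z' \<in> adjoin_upto A x n" "z = b + x * z'"
    using Suc.prems(2) by (rule adjoin_upto_SucE)
  ultimately show ?case
    using Suc.IH adjoin_upto_SucI[OF add_mem, of a b "y' + z'" x n] by (simp add: algebra_simps)
qed simp

lemma adjoin_upto_scalar: "c \<in> A \<Longrightarrow> y \<in> adjoin_upto A x n \<Longrightarrow> c * y \<in> adjoin_upto A x n"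
proof (induction n arbitrary: y)
  case (Suc n)
  obtain a y' where a: "a \<in> A" "y' \<in> adjoin_upto A x n" "y = a + x * y'"
    using Suc.prems(2) by (rule adjoin_upto_SucE)
  have "c * a + x * (c * y') \<in> adjoin_upto A x (Suc n)"
    using mult_mem[OF Suc.prems(1) a(1)] Suc.IH[OF Suc.prems(1) a(2)] by (rule adjoin_upto_SucI)
  then show ?case using a(3) by (simp add: algebra_simps)
qed simp

lemma adjoin_upto_shift: "y \<in> adjoin_upto A x n \<Longrightarrow> x * y \<in> adjoin_upto A x (Suc n)"
  using adjoin_upto_SucI[OF zero_mem] by fastforce

lemma adjoin_upto_const: "a \<in> A \<Longrightarrow> a \<in> adjoin_upto A x (Suc n)"
  using adjoin_upto_SucI[OF _ zero_in_adjoin_upto, of a x n] by simp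

lemma adjoin_upto_mult:
  "y \<in> adjoin_upto A x n \<Longrightarrow> z \<in> adjoin_upto A x m \<Longrightarrow> y * z \<in> adjoin_upto A x (n + m)"
proof (induction n arbitrary: y)
  case (Suc n)
  obtain a y' where a: "a \<in> A" "y' \<in> adjoin_upto A x n" "y = a + x * y'"
    using Suc.prems(1) by (rule adjoin_upto_SucE)
  have "a * z \<in> adjoin_upto A x (Suc n + m)"
    using adjoin_upto_scalar[OF a(1) Suc.prems(2)] adjoin_upto_mono[of m "Suc n + m"] by auto
  moreover have "x * (y' * z) \<in> adjoin_upto A x (Suc n + m)"
    using adjoin_upto_shift[OF Suc.IH[OF a(2) Suc.prems(2)]] by simp
  moreover have "y * z = a * z + x * (y' * z)" using a(3) by (simp add: algebra_simps)
  ultimately show ?case using adjoin_upto_add by simp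
qed (simp add: zero_in_adjoin_upto)

lemma power_in_adjoin_upto: "x ^ k \<in> adjoin_upto A x (Suc k)"
  by (induction k) (simp_all add: adjoin_upto_const one_mem adjoin_upto_shift)

lemma adjoin_upto_iff_sum:
  "y \<in> adjoin_upto A x n \<longleftrightarrow> (\<exists>c. (\<forall>i<n. c i \<in> A) \<and> y = (\<Sum>i<n. c i * x ^ i))"
proof (induction n arbitrary: y)
  case (Suc n)
  have shift: "(\<Sum>i<Suc n. c i * x ^ i) = c 0 + x * (\<Sum>i<n. c (Suc i) * x ^ i)" for c
    by (simp add: sum.lessThan_Suc_shift sum_distrib_left algebra_simps del: sum.lessThan_Suc)
  show ?case
  proof
    assume "y \<in> adjoin_upto A x (Suc n)"
    then obtain a y' where a: "a \<in> A" "y' \<in> adjoin_upto A x n" "y = a + x * y'"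
      by (rule adjoin_upto_SucE)
    obtain c where c: "\<forall>i<n. c i \<in> A" "y' = (\<Sum>i<n. c i * x ^ i)" using Suc.IH a(2) by blast
    have "\<forall>i<Suc n. case_nat a c i \<in> A" using c(1) a(1) by (auto split: nat.split)
    moreover have "y = (\<Sum>i<Suc n. case_nat a c i * x ^ i)" using a(3) c(2) shift by simp
    ultimately show "\<exists>c. (\<forall>i<Suc n. c i \<in> A) \<and> y = (\<Sum>i<Suc n. c i * x ^ i)" by blast
  next
    assume "\<exists>c. (\<forall>i<Suc n. c i \<in> A) \<and> y = (\<Sum>i<Suc n. c i * x ^ i)"
    then obtain c where c: "\<forall>i<Suc n. c i \<in> A" "y = (\<Sum>i<Suc n. c i * x ^ i)" by blast
    have "(\<Sum>i<n. c (Suc i) * x ^ i) \<in> adjoin_upto A x n"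
      using c(1) by (subst Suc.IH) (intro exI[of _ "\<lambda>i. c (Suc i)"], auto)
    then show "y \<in> adjoin_upto A x (Suc n)"
      unfolding c(2) shift using c(1) by (intro adjoin_upto_SucI) auto
  qed
qed simp

lemma mem_adjoin_iff: "y \<in> adjoin A x \<longleftrightarrow> (\<exists>n. y \<in> adjoin_upto A x n)"
  unfolding adjoin_def adjoin_upto_iff_sum by blast

lemma finite_subset_adjoin_upto:
  assumes "finite G" "G \<subseteq> adjoin A x"
  shows "\<exists>N. G \<subseteq> adjoin_upto A x N"
proof -
  have "\<forall>g\<in>G. \<exists>n. g \<in> adjoin_upto A x n" using assms(2) mem_adjoin_iff by blast
  then obtain deg where deg: "\<forall>g\<in>G. g \<in> adjoin_upto A x (deg g)" by (auto dest!: bchoice)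
  have "g \<in> adjoin_upto A x (sum deg G)" if "g \<in> G" for g
    using deg that adjoin_upto_mono member_le_sum[OF _ _ assms(1), of g deg] by blast
  then show ?thesis by blast
qed

lemma subring_adjoin: "subring (adjoin A x)"
  unfolding subring_def
proof (intro conjI ballI)
  show "0 \<in> adjoin A x" using zero_in_adjoin_upto mem_adjoin_iff by blast
  show "1 \<in> adjoin A x" using adjoin_upto_const[OF one_mem] mem_adjoin_iff by blast
  fix y z assume "y \<in> adjoin A x" "z \<in> adjoin A x"
  then obtain n m where nm: "y \<in> adjoin_upto A x n" "z \<in> adjoin_upto A x m"
    unfolding mem_adjoin_iff by blast
  then have y: "y \<in> adjoin_upto A x (n + m)" and z: "z \<in> adjoin_upto A x (n + m)"
    using adjoin_upto_mono[of n "n + m" x] adjoin_upto_mono[of m "n + m" x] by auto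
  show "y + z \<in> adjoin A x" using adjoin_upto_add[OF y z] mem_adjoin_iff by blast
  have "y + (- 1) * z \<in> adjoin_upto A x (n + m)"
    using adjoin_upto_add[OF y adjoin_upto_scalar[OF uminus_mem[OF one_mem] z]] .
  then show "y - z \<in> adjoin A x" using mem_adjoin_iff by auto
  show "y * z \<in> adjoin A x" using adjoin_upto_mult[OF nm] mem_adjoin_iff by blast
qed

lemma subset_adjoin: "A \<subseteq> adjoin A x"
  using adjoin_upto_const mem_adjoin_iff by blast

lemma self_in_adjoin: "x \<in> adjoin A x"
  unfolding mem_adjoin_iff using power_in_adjoin_upto[of x 1] by auto

lemma integral_over_if_power_in_adjoin_upto:
  assumes "x ^ n \<in> adjoin_upto A x n"
  shows "integral_over A x"
proof -
  obtain d where d: "\<forall>i<n. d i \<in> A" "x ^ n = (\<Sum>i<n. d i * x ^ i)"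
    using assms unfolding adjoin_upto_iff_sum by blast
  show ?thesis
    unfolding integral_over_def
  proof (intro exI conjI)
    show "\<forall>i<n. - d i \<in> A" using d(1) uminus_mem by auto
    show "x ^ n + (\<Sum>i<n. - d i * x ^ i) = 0" using d(2) by (simp add: sum_negf)
  qed
qed

lemma adjoin_upto_subset_inverse_pow:
  assumes P: "ring_ideal A P" and b: "b \<in> inverse_ideal A P"
  shows "adjoin_upto A b n \<subseteq> inverse_ideal A (submod_pow A P n)"
proof (induction n)
  case 0 then show ?case by (simp add: inverse_ideal_def zero_mem)
next
  case (Suc n)
  have PA: "P \<subseteq> A" "submodule A P" using P by (auto simp: ring_ideal_iff_submodule)
  have PnA: "submod_pow A P n \<subseteq> A" by (rule submod_pow_subset[OF PA(2,1)])
  show ?case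
  proof
    fix y assume "y \<in> adjoin_upto A b (Suc n)"
    then obtain a y' where a: "a \<in> A" "y' \<in> adjoin_upto A b n" "y = a + b * y'"
      by (rule adjoin_upto_SucE)
    have "submod_mult P (submod_pow A P n) \<subseteq> {z. y * z \<in> A}"
    proof (rule submod_mult_least)
      fix p q assume pq: "p \<in> P" "q \<in> submod_pow A P n"
      have "b * p \<in> A" using b pq(1) unfolding inverse_ideal_def by blast
      moreover have "y' * q \<in> A" using Suc a(2) pq(2) unfolding inverse_ideal_def by blast
      moreover have "y * (p * q) = a * (p * q) + (b * p) * (y' * q)" using a(3) by (simp add: algebra_simps)
      ultimately show "p * q \<in> {z. y * z \<in> A}"
        using a(1) pq PA(1) PnA by (auto intro!: add_mem mult_mem)
    qed (auto simp: zero_mem add_mem distrib_left)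
    then show "y \<in> inverse_ideal A (submod_pow A P (Suc n))" unfolding inverse_ideal_def by auto
  qed
qed

end

section \<open>Noetherian domains\<close>

inductive prime_product :: "'k::field set \<Rightarrow> nat \<Rightarrow> 'k set \<Rightarrow> bool" for A where
  prime_product_empty: "prime_product A 0 A"
| prime_product_insert:
    "prime_ideal_of A Q \<Longrightarrow> Q \<noteq> {0} \<Longrightarrow> prime_product A n X \<Longrightarrow>
      prime_product A (Suc n) (submod_mult Q X)"

context field_subring
begin

lemma prime_product_ideal: "prime_product A n X \<Longrightarrow> ring_ideal A X"
proof (induction rule: prime_product.induct)
  case (prime_product_insert Q n X)
  then show ?case
    using ring_ideal_submod_mult[OF prime_idealD(1)] ring_idealD(1) by blast
qed (rule ring_ideal_ring)

lemma prime_product_mult: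
  "prime_product A n X \<Longrightarrow> prime_product A m Y \<Longrightarrow> prime_product A (n + m) (submod_mult X Y)"
proof (induction rule: prime_product.induct)
  case prime_product_empty
  then show ?case
    using submod_mult_ring_left prime_product_ideal by (simp add: ring_ideal_iff_submodule)
next
  case (prime_product_insert Q n X)
  then show ?case by (simp add: submod_mult_assoc prime_product.prime_product_insert)
qed

end

lemma ring_ideal_Union_chain:
  assumes "C \<noteq> {}" "subset.chain F C" "\<forall>I\<in>F. ring_ideal A I"
  shows "ring_ideal A (\<Union>C)"
proof -
  have "C \<subseteq> F" and lin: "\<forall>X\<in>C. \<forall>Y\<in>C. X \<subseteq> Y \<or> Y \<subseteq> X"
    using assms(2) unfolding subset_chain_def by blast+
  then have ideals: "\<forall>X\<in>C. ring_ideal A X" using assms(3) by blast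
  show ?thesis
    unfolding ring_ideal_def
  proof (intro conjI ballI)
    show "\<Union>C \<subseteq> A" using ideals ring_idealD(1) by blast
    obtain X where "X \<in> C" using assms(1) by blast
    then show "0 \<in> \<Union>C" using ideals ring_idealD(2) by blast
  next
    fix x y assume "x \<in> \<Union>C" "y \<in> \<Union>C"
    then obtain X Y where XY: "X \<in> C" "Y \<in> C" "x \<in> X" "y \<in> Y" by auto
    have "X \<union> Y \<in> C"
    proof (cases "X \<subseteq> Y")
      case True then show ?thesis using XY(2) by (simp add: sup_absorb2)
    next
      case False then have "Y \<subseteq> X" using lin XY by blast
      then show ?thesis using XY(1) by (simp add: sup_absorb1)
    qed
    then have "x + y \<in> X \<union> Y" using ideals XY(3,4) ring_idealD(3)[of A "X \<union> Y" x y] by blast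
    then show "x + y \<in> \<Union>C" using \<open>X \<union> Y \<in> C\<close> by blast
  next
    fix a x assume "a \<in> A" "x \<in> \<Union>C"
    then obtain X where "X \<in> C" "x \<in> X" by blast
    then have "a * x \<in> X" using ideals \<open>a \<in> A\<close> ring_idealD(4) by blast
    then show "a * x \<in> \<Union>C" using \<open>X \<in> C\<close> by blast
  qed
qed

locale noetherian_subring = field_subring +
  assumes noetherian: "noetherian_ring A"
begin

lemma ring_ideal_finitely_generated:
  assumes "ring_ideal A I"
  obtains G where "finite G" "G \<subseteq> I" "I = {x. \<exists>c. (\<forall>g\<in>G. c g \<in> A) \<and> x = (\<Sum>g\<in>G. c g * g)}"
  using noetherian assms unfolding noetherian_ring_def fin_generated_ideal_def by meson

lemma ring_ideal_maximal_element:
  assumes "F \<noteq> {}" "\<forall>I\<in>F. ring_ideal A I"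
  shows "\<exists>M\<in>F. \<forall>X\<in>F. M \<subseteq> X \<longrightarrow> X = M"
proof (rule subset_Zorn)
  fix C assume chain: "subset.chain F C"
  then have CF: "C \<subseteq> F" unfolding subset_chain_def by blast
  show "\<exists>U\<in>F. \<forall>X\<in>C. X \<subseteq> U"
  proof (cases "C = {}")
    case True then show ?thesis using assms(1) by auto
  next
    case False
    have "ring_ideal A (\<Union>C)" by (rule ring_ideal_Union_chain[OF False chain assms(2)])
    then obtain G where G: "finite G" "G \<subseteq> \<Union>C"
      and span: "\<Union>C = {x. \<exists>c. (\<forall>g\<in>G. c g \<in> A) \<and> x = (\<Sum>g\<in>G. c g * g)}"
      by (rule ring_ideal_finitely_generated)
    obtain U where U: "U \<in> C" "G \<subseteq> U"
      using finite_subset_Union_chain[OF G False chain] by blast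
    have U_ideal: "ring_ideal A U" using U(1) CF assms(2) by blast
    have "\<Union>C \<subseteq> U"
    proof
      fix x assume "x \<in> \<Union>C"
      then obtain c where c: "\<forall>g\<in>G. c g \<in> A" "x = (\<Sum>g\<in>G. c g * g)" using span by blast
      show "x \<in> U" unfolding c(2)
      proof (rule sum_closed)
        show "0 \<in> U" "\<And>x y. x \<in> U \<Longrightarrow> y \<in> U \<Longrightarrow> x + y \<in> U"
          using ring_idealD[OF U_ideal] by auto
        show "c g * g \<in> U" if "g \<in> G" for g
          using ring_idealD(4)[OF U_ideal] c(1) U(2) that by blast
      qed
    qed
    then show ?thesis using U(1) CF by blast
  qed
qed

lemma ring_ideal_induct [consumes 1, case_names step]:
  assumes "ring_ideal A I"
    and step: "\<And>I. ring_ideal A I \<Longrightarrow> (\<And>J. ring_ideal A J \<Longrightarrow> I \<subset> J \<Longrightarrow> P J) \<Longrightarrow> P I"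
  shows "P I"
proof (rule ccontr)
  assume "\<not> P I"
  then obtain M where M: "M \<in> {I. ring_ideal A I \<and> \<not> P I}"
    and max: "\<forall>X\<in>{I. ring_ideal A I \<and> \<not> P I}. M \<subseteq> X \<longrightarrow> X = M"
    using ring_ideal_maximal_element[of "{I. ring_ideal A I \<and> \<not> P I}"] assms(1) by blast
  have "P M" by (rule step) (use M max in auto)
  then show False using M by blast
qed

lemma exists_maximal_ideal:
  assumes "ring_ideal A I" "I \<noteq> A"
  obtains M where "maximal_ideal_of A M" "I \<subseteq> M"
proof -
  obtain M where M: "M \<in> {J. ring_ideal A J \<and> I \<subseteq> J \<and> J \<noteq> A}"
    and max: "\<forall>X\<in>{J. ring_ideal A J \<and> I \<subseteq> J \<and> J \<noteq> A}. M \<subseteq> X \<longrightarrow> X = M"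
    using ring_ideal_maximal_element[of "{J. ring_ideal A J \<and> I \<subseteq> J \<and> J \<noteq> A}"] assms by blast
  have "maximal_ideal_of A M" unfolding maximal_ideal_of_def using M max by auto
  then show ?thesis using M that by blast
qed

text \<open>The ideal \<open>c A[x]\<close> is finitely generated, so \<open>c x\<^sup>N\<close> is an \<open>A\<close>-combination of
  generators \<open>c y\<^sub>i\<close> with all \<open>y\<^sub>i\<close> of degree \<open>< N\<close>; dividing by \<open>c\<close> makes \<open>x\<close> integral.\<close>
lemma almost_integral_mem:
  assumes int_closed: "integrally_closed A" and c: "c \<noteq> 0" and cx: "\<forall>n. c * x ^ n \<in> A"
  shows "x \<in> A"
proof -
  define L where "L = submod_mult (principal A c) (adjoin A x)"
  have adjoin: "submodule A (adjoin A x)" by (rule submodule_subring[OF subring_adjoin subset_adjoin])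
  have L: "L = (\<lambda>y. c * y) ` adjoin A x"
    unfolding L_def by (rule submod_mult_principal[OF adjoin])
  have "c * y \<in> A" if y: "y \<in> adjoin A x" for y
  proof -
    obtain n d where d: "\<forall>i<n. d i \<in> A" "y = (\<Sum>i<n. d i * x ^ i)"
      using y unfolding adjoin_def by blast
    have "c * y = (\<Sum>i<n. d i * (c * x ^ i))" by (simp add: d(2) sum_distrib_left ac_simps)
    also have "\<dots> \<in> A" using d(1) cx by (intro sum_closed) (auto simp: zero_mem add_mem mult_mem)
    finally show ?thesis .
  qed
  then have "L \<subseteq> A" unfolding L by blast
  then have "ring_ideal A L"
    unfolding ring_ideal_iff_submodule L_def using submodule_submod_mult2[OF adjoin] by blast
  then obtain G where G: "finite G" "G \<subseteq> L"
    and span: "L = {z. \<exists>e. (\<forall>g\<in>G. e g \<in> A) \<and> z = (\<Sum>g\<in>G. e g * g)}"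
    by (rule ring_ideal_finitely_generated)
  have "(\<lambda>g. g / c) ` G \<subseteq> adjoin A x" using G(2) c unfolding L by auto
  then obtain N where N: "(\<lambda>g. g / c) ` G \<subseteq> adjoin_upto A x N"
    using finite_subset_adjoin_upto G(1) by blast
  have "c * x ^ N \<in> L" unfolding L using power_in_adjoin_upto mem_adjoin_iff by blast
  then obtain e where e: "\<forall>g\<in>G. e g \<in> A" "c * x ^ N = (\<Sum>g\<in>G. e g * g)"
    unfolding span by blast
  have "x ^ N = (\<Sum>g\<in>G. e g * (g / c))"
    using c by (simp add: sum_divide_distrib[symmetric] e(2)[symmetric])
  also have "\<dots> \<in> adjoin_upto A x N"
  proof (rule sum_closed)
    show "e g * (g / c) \<in> adjoin_upto A x N" if "g \<in> G" for g
      using that e(1) N by (intro adjoin_upto_scalar) auto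
  qed (auto intro: zero_in_adjoin_upto adjoin_upto_add)
  finally have "integral_over A x" by (rule integral_over_if_power_in_adjoin_upto)
  then show ?thesis using int_closed unfolding integrally_closed_def by blast
qed

lemma stabilizer_of_ideal_mem:
  assumes "integrally_closed A" and I: "ring_ideal A I" "I \<noteq> {0}" and stable: "\<forall>y\<in>I. y * x \<in> I"
  shows "x \<in> A"
proof -
  have pow: "y * x ^ n \<in> I" if "y \<in> I" for y n
    using that by (induction n arbitrary: y) (simp_all add: stable mult.assoc[symmetric])
  obtain i where "i \<in> I" "i \<noteq> 0" using I(2) ring_idealD(2)[OF I(1)] by blast
  then show ?thesis
    using almost_integral_mem[OF assms(1)] pow ring_idealD(1)[OF I(1)] by blast
qed

lemma ring_ideal_contains_prime_product:
  assumes "ring_ideal A I" "I \<noteq> {0}"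
  shows "\<exists>n X. prime_product A n X \<and> X \<subseteq> I"
  using assms
proof (induction rule: ring_ideal_induct)
  case (step I)
  have I: "submodule A I" using step.hyps by (simp add: ring_ideal_iff_submodule)
  have bigger: "ring_ideal A (ideal_insert A I a) \<and> I \<subset> ideal_insert A I a"
    if "a \<in> A" "a \<notin> I" for a
    using ring_ideal_ideal_insert[OF step.hyps that(1)] ideal_insert_submodule[OF I, of a] that(2)
    by blast
  consider "I = A" | "prime_ideal_of A I" | a b where "a \<in> A" "b \<in> A" "a * b \<in> I" "a \<notin> I" "b \<notin> I"
    using step.hyps unfolding prime_ideal_of_def by blast
  then show ?case
  proof cases
    case 1
    then show ?thesis using prime_product_empty by blast
  next
    case 2
    have "prime_product A (Suc 0) (submod_mult I A)"
      by (rule prime_product_insert[OF 2 step.prems prime_product_empty])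
    then show ?thesis using submod_mult_ring_right[OF I] by auto
  next
    case (3 a b)
    have nonzero: "J \<noteq> {0}" if "I \<subset> J" for J
      using that step.prems ring_idealD(2)[OF step.hyps] by blast
    obtain n X where X: "prime_product A n X" "X \<subseteq> ideal_insert A I a"
      using step.IH[OF _ _ nonzero] bigger[OF 3(1,4)] by blast
    obtain m Y where Y: "prime_product A m Y" "Y \<subseteq> ideal_insert A I b"
      using step.IH[OF _ _ nonzero] bigger[OF 3(2,5)] by blast
    have "submod_mult X Y \<subseteq> I"
      using submod_mult_mono[OF X(2) Y(2)] submod_mult_ideal_insert_subset[OF step.hyps 3(1-3)] by blast
    then show ?thesis using prime_product_mult[OF X(1) Y(1)] by blast
  qed
qed

end

section \<open>Dedekind domains\<close>

locale dedekind = noetherian_subring +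
  assumes int_closed: "integrally_closed A"
    and prime_imp_maximal: "prime_ideal_of A P \<Longrightarrow> P \<noteq> {0} \<Longrightarrow> maximal_ideal_of A P"
    and fraction: "\<exists>a\<in>A. \<exists>s\<in>A. s \<noteq> 0 \<and> x = a / s"
begin

lemma prime_product_subset_maximal:
  assumes "prime_product A n X" "maximal_ideal_of A P" "X \<subseteq> P"
  shows "\<exists>m Y. n = Suc m \<and> prime_product A m Y \<and> X = submod_mult P Y"
  using assms
proof (induction rule: prime_product.induct)
  case prime_product_empty
  then show ?case using maximal_idealD(1,2) ring_idealD(1) by blast
next
  case (prime_product_insert Q n X)
  have P: "prime_ideal_of A P" "ring_ideal A P" "P \<noteq> A"
    using maximal_imp_prime[OF prime_product_insert.prems(1)] maximal_idealD(1,2)[OF prime_product_insert.prems(1)]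
    by auto
  have "Q \<subseteq> A" "X \<subseteq> A"
    using ring_idealD(1)[OF prime_idealD(1)[OF prime_product_insert.hyps(1)]]
      ring_idealD(1)[OF prime_product_ideal[OF prime_product_insert.hyps(3)]] by auto
  then have "Q \<subseteq> P \<or> X \<subseteq> P"
    using prime_ideal_submod_mult[OF P(1)] prime_product_insert.prems(2) by blast
  then show ?case
  proof
    assume "Q \<subseteq> P"
    then have "P = Q"
      using maximal_idealD(3)[OF prime_imp_maximal[OF prime_product_insert.hyps(1,2)] P(2)] P(3)
      by blast
    then show ?thesis using prime_product_insert.hyps(3) by blast
  next
    assume "X \<subseteq> P"
    then obtain m Y where "n = Suc m" "prime_product A m Y" "X = submod_mult P Y"
      using prime_product_insert.IH prime_product_insert.prems(1) by blast
    then show ?thesis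
      using prime_product.prime_product_insert[OF prime_product_insert.hyps(1,2)]
      by (auto simp: submod_mult_left_commute)
  qed
qed

text \<open>Take a shortest product of nonzero primes inside \<open>a A \<subseteq> P\<close>; one factor is \<open>P\<close>, and an
  element \<open>b\<close> of the cofactor outside \<open>a A\<close> gives \<open>b / a \<in> P\<^sup>-\<^sup>1 - A\<close>.\<close>
lemma inverse_ideal_not_subset:
  assumes P: "maximal_ideal_of A P" "P \<noteq> {0}"
  shows "\<exists>x\<in>inverse_ideal A P. x \<notin> A"
proof -
  have PI: "ring_ideal A P" using maximal_idealD(1)[OF P(1)] .
  obtain a where a: "a \<in> P" "a \<noteq> 0" using P(2) ring_idealD(2)[OF PI] by blast
  have aA: "a \<in> A" using a(1) ring_idealD(1)[OF PI] by blast
  have aP: "principal A a \<subseteq> P"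
    using a(1) ring_idealD(4)[OF PI] unfolding principal_def by (auto simp: mult.commute)
  have "principal A a \<noteq> {0}" using self_in_principal[of a] a(2) by blast
  then have ex: "\<exists>n X. prime_product A n X \<and> X \<subseteq> principal A a"
    by (rule ring_ideal_contains_prime_product[OF ring_ideal_principal[OF aA]])
  define n where "n = (LEAST n. \<exists>X. prime_product A n X \<and> X \<subseteq> principal A a)"
  obtain X where X: "prime_product A n X" "X \<subseteq> principal A a"
    unfolding n_def using LeastI_ex[OF ex] by blast
  obtain m Y where mY: "n = Suc m" "prime_product A m Y" "X = submod_mult P Y"
    using prime_product_subset_maximal[OF X(1) P(1)] X(2) aP by blast
  have "\<not> Y \<subseteq> principal A a"
    using not_less_Least[of m "\<lambda>n. \<exists>X. prime_product A n X \<and> X \<subseteq> principal A a"] mY(1,2)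
    unfolding n_def by auto
  then obtain b where "b \<in> Y" "b \<notin> principal A a" by blast
  then show ?thesis using div_in_inverse_ideal[OF a(2), of P Y b] mY(3) X(2) by blast
qed

lemma ring_ideal_psubset_mult_inverse:
  assumes I: "ring_ideal A I" "I \<noteq> {0}" and P: "maximal_ideal_of A P" "P \<noteq> {0}" and IP: "I \<subseteq> P"
  shows "ring_ideal A (submod_mult I (inverse_ideal A P))" "I \<subset> submod_mult I (inverse_ideal A P)"
proof -
  have "submod_mult I (inverse_ideal A P) \<subseteq> submod_mult P (inverse_ideal A P)"
    using IP by (rule submod_mult_mono) simp
  then have "submod_mult I (inverse_ideal A P) \<subseteq> A"
    using submod_mult_inverse_ideal_subset by blast
  then show "ring_ideal A (submod_mult I (inverse_ideal A P))"
    using I(1) submodule_submod_mult[of A I] by (simp add: ring_ideal_iff_submodule)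
  have PA: "P \<subseteq> A" using ring_idealD(1)[OF maximal_idealD(1)[OF P(1)]] .
  have sup: "I \<subseteq> submod_mult I (inverse_ideal A P)"
    using submod_mult_memI[OF _ one_in_inverse_ideal[OF PA], of _ I] by fastforce
  show "I \<subset> submod_mult I (inverse_ideal A P)"
  proof (rule ccontr)
    assume "\<not> I \<subset> submod_mult I (inverse_ideal A P)"
    then have eq: "submod_mult I (inverse_ideal A P) = I" using sup by blast
    obtain x where x: "x \<in> inverse_ideal A P" "x \<notin> A" using inverse_ideal_not_subset[OF P] by blast
    have "\<forall>y\<in>I. y * x \<in> I" using submod_mult_memI[OF _ x(1), of _ I] eq by blast
    then show False using stabilizer_of_ideal_mem[OF int_closed I] x(2) by blast
  qed
qed

lemma maximal_ideal_mult_inverse: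
  assumes P: "maximal_ideal_of A P" "P \<noteq> {0}"
  shows "submod_mult P (inverse_ideal A P) = A"
proof -
  note bigger = ring_ideal_psubset_mult_inverse[OF maximal_idealD(1)[OF P(1)] P(2) P order.refl]
  have "P \<subseteq> A" using ring_idealD(1)[OF maximal_idealD(1)[OF P(1)]] .
  with bigger show ?thesis using maximal_idealD(3)[OF P(1)] submod_mult_inverse_ideal_subset
    by blast
qed

lemma ring_ideal_factorization:
  assumes "ring_ideal A I" "I \<noteq> {0}"
  shows "\<exists>n. prime_product A n I"
  using assms
proof (induction rule: ring_ideal_induct)
  case (step I)
  show ?case
  proof (cases "I = A")
    case True then show ?thesis using prime_product_empty by blast
  next
    case False
    then obtain P where P: "maximal_ideal_of A P" "I \<subseteq> P"
      using exists_maximal_ideal step.hyps by blast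
    have "P \<noteq> {0}" using P(2) step.prems ring_idealD(2)[OF step.hyps] by blast
    define J where "J = submod_mult I (inverse_ideal A P)"
    note J = ring_ideal_psubset_mult_inverse[OF step.hyps step.prems P(1) \<open>P \<noteq> {0}\<close> P(2), folded J_def]
    have "J \<noteq> {0}" using J(2) step.prems ring_idealD(2)[OF step.hyps] by blast
    then obtain n where "prime_product A n J" using step.IH J by blast
    moreover have "submod_mult P J = I"
      unfolding J_def using maximal_ideal_mult_inverse[OF P(1) \<open>P \<noteq> {0}\<close>] step.hyps
      by (simp add: submod_mult_left_commute submod_mult_ring_right ring_ideal_iff_submodule)
    moreover have "prime_ideal_of A P" by (rule maximal_imp_prime[OF P(1)])
    ultimately show ?thesis using prime_product_insert \<open>P \<noteq> {0}\<close> by metis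
  qed
qed

lemma prime_product_invertible:
  "prime_product A n X \<Longrightarrow> \<exists>J. submodule A J \<and> submod_mult X J = A"
proof (induction rule: prime_product.induct)
  case prime_product_empty
  then show ?case using submodule_ring submod_mult_ring_left by blast
next
  case (prime_product_insert Q n X)
  then obtain J where J: "submodule A J" "submod_mult X J = A" by blast
  have Q: "submod_mult Q (inverse_ideal A Q) = A"
    using maximal_ideal_mult_inverse prime_imp_maximal prime_product_insert.hyps(1,2) by blast
  have "submod_mult (submod_mult Q X) (submod_mult (inverse_ideal A Q) J)
      = submod_mult (submod_mult Q (inverse_ideal A Q)) (submod_mult X J)"
    by (simp only: submod_mult_assoc submod_mult_left_commute[of X])
  also have "\<dots> = A" by (simp add: Q J(2) submod_mult_ring_left submodule_ring)
  finally have "submod_mult (submod_mult Q X) (submod_mult (inverse_ideal A Q) J) = A" .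
  then show ?case using submodule_submod_mult[OF submodule_inverse_ideal] by blast
qed

lemma fractional_ideal_mult_inverse:
  assumes I: "fractional_ideal A I"
  shows "submod_mult I (inverse_ideal A I) = A"
proof -
  obtain d where d: "ring_ideal A (submod_mult (principal A d) I)" "submod_mult (principal A d) I \<noteq> {0}"
    using fractional_ideal_scaled[OF I] by blast
  then obtain n where "prime_product A n (submod_mult (principal A d) I)"
    using ring_ideal_factorization by blast
  then obtain J where "submod_mult (submod_mult (principal A d) I) J = A"
    using prime_product_invertible by blast
  then have "submod_mult I (submod_mult (principal A d) J) = A"
    by (simp add: submod_mult_left_commute submod_mult_assoc)
  then show ?thesis by (rule invertible_imp_mult_inverse_ideal)
qed

lemma torsion_class_groupI:
  assumes max: "\<And>P. maximal_ideal_of A P \<Longrightarrow> P \<noteq> {0} \<Longrightarrow> torsion_ideal A P"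
  shows "torsion_class_group A"
  unfolding torsion_class_group_def
proof (intro allI impI)
  fix I assume I: "fractional_ideal A I"
  obtain d where d: "d \<noteq> 0" "ring_ideal A (submod_mult (principal A d) I)"
    "submod_mult (principal A d) I \<noteq> {0}"
    using fractional_ideal_scaled[OF I] by blast
  then obtain n where "prime_product A n (submod_mult (principal A d) I)"
    using ring_ideal_factorization by blast
  then have "torsion_ideal A (submod_mult (principal A d) I)"
  proof (induction rule: prime_product.induct)
    case prime_product_empty show ?case by (rule torsion_ideal_ring)
  next
    case (prime_product_insert Q n X)
    have "ring_ideal A Q" using prime_idealD(1)[OF prime_product_insert.hyps(1)] .
    then show ?case
      using torsion_ideal_submod_mult max prime_imp_maximal prime_product_insert
        prime_product_ideal[OF prime_product_insert.hyps(3)]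
      by (simp add: ring_ideal_iff_submodule)
  qed
  then have "torsion_ideal A I"
    using torsion_ideal_principal_multD[OF fractional_ideal_submodule[OF I] d(1)] by blast
  then show "\<exists>n>0. principal_frac A (submod_pow A I n)"
    unfolding torsion_ideal_def principal_frac_iff by blast
qed

lemma prime_product_eq_power:
  assumes P: "maximal_ideal_of A P" and L: "prime_product A n L" "submod_pow A P m \<subseteq> L"
  shows "L = submod_pow A P n"
  using L
proof (induction rule: prime_product.induct)
  case (prime_product_insert Q n X)
  have QA: "Q \<subseteq> A" and XA: "X \<subseteq> A"
    using ring_idealD(1)[OF prime_idealD(1)[OF prime_product_insert.hyps(1)]]
      ring_idealD(1)[OF prime_product_ideal[OF prime_product_insert.hyps(3)]] by auto
  have sub: "submod_mult Q X \<subseteq> Q" "submod_mult Q X \<subseteq> X"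
    using submod_mult_subset_left[OF _ XA] submod_mult_subset_left[OF _ QA, of X]
      prime_idealD(1)[OF prime_product_insert.hyps(1)] prime_product_ideal[OF prime_product_insert.hyps(3)]
    by (auto simp: ring_ideal_iff_submodule submod_mult_comm[of X])
  have "m \<noteq> 0"
  proof
    assume "m = 0"
    then have "A \<subseteq> Q" using prime_product_insert.prems sub(1) by simp
    then show False using QA prime_idealD(2)[OF prime_product_insert.hyps(1)] by blast
  qed
  then have "P \<subseteq> Q"
    using submod_pow_subset_prime[OF prime_product_insert.hyps(1) maximal_idealD(1)[OF P]]
      prime_product_insert.prems sub(1) by blast
  then have "Q = P"
    using maximal_idealD(3)[OF P prime_idealD(1)[OF prime_product_insert.hyps(1)]]
      prime_idealD(2)[OF prime_product_insert.hyps(1)] by blast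
  then show ?case using prime_product_insert.IH prime_product_insert.prems sub(2) by auto
qed simp

subsection \<open>Overrings of a Dedekind domain\<close>

lemma fractional_ideal_ideal_insert: "fractional_ideal A (ideal_insert A A b)"
proof -
  note I = ideal_insert_submodule[OF submodule_ring, of b]
  obtain a s where as: "a \<in> A" "s \<in> A" "s \<noteq> 0" "b = a / s" using fraction by blast
  have "s * x \<in> A" if x: "x \<in> ideal_insert A A b" for x
  proof -
    obtain i r where "i \<in> A" "r \<in> A" "x = i + b * r" using x unfolding ideal_insert_def by blast
    moreover have "s * (i + b * r) = s * i + a * r" using as(3,4) by (simp add: field_simps)
    ultimately show ?thesis using as(1,2) by (simp add: add_mem mult_mem)
  qed
  moreover have "ideal_insert A A b \<noteq> {0}" using I(2) one_mem by auto
  ultimately show ?thesis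
    using I(1) as(2,3) unfolding fractional_ideal_def submodule_def by blast
qed

lemma torsion_overring_denominator:
  assumes tors: "torsion_class_group A" and B: "overring A B" and b: "b \<in> B"
  shows "\<exists>t\<in>A. t \<noteq> 0 \<and> inverse t \<in> B \<and> t * b \<in> A"
proof -
  have SB: "subring B" "A \<subseteq> B" using B unfolding overring_def by auto
  define I where "I = ideal_insert A A b"
  have I: "submodule A I" "A \<subseteq> I" "b \<in> I"
    unfolding I_def by (rule ideal_insert_submodule[OF submodule_ring])+
  have IB: "I \<subseteq> B"
    unfolding I_def ideal_insert_def using SB b by (auto intro: subringD(3,5)[OF SB(1)])
  define J where "J = inverse_ideal A I"
  have IJ: "submod_mult I J = A"
    unfolding J_def I_def by (rule fractional_ideal_mult_inverse[OF fractional_ideal_ideal_insert])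
  note J = inverse_ideal_fractional[OF IJ[unfolded J_def] subsetD[OF I(2) one_mem], folded J_def]
  obtain n t where n: "n > 0" "t \<noteq> 0" "submod_pow A J n = principal A t"
    using tors J(2) unfolding torsion_class_group_def principal_frac_iff by blast
  have tJ: "t \<in> J"
    using self_in_principal[of t] n(3) submod_pow_subset_self[OF _ J(1) n(1)]
      submodule_inverse_ideal unfolding J_def by blast
  have "inverse t \<in> B"
    using inverse_in_submod_pow[OF I(1) _ IJ n(2,3)] submodule_inverse_ideal
      submod_pow_subset_subring[OF SB IB] unfolding J_def by blast
  moreover have "t * b \<in> A" using tJ I(3) unfolding J_def inverse_ideal_def by blast
  ultimately show ?thesis using tJ J(1) n(2) by blast
qed

lemma torsion_imp_localization:
  "torsion_class_group A \<Longrightarrow> overring A B \<Longrightarrow> localization_of A B"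
  by (rule localization_ofI) (auto intro: torsion_overring_denominator)

lemma unit_if_inverse_pow_bounded:
  assumes P: "maximal_ideal_of A P" "P \<noteq> {0}" and nt: "\<not> torsion_ideal A P" and u: "u \<noteq> 0"
    and uN: "u \<in> inverse_ideal A (submod_pow A P N)" "inverse u \<in> inverse_ideal A (submod_pow A P N)"
  shows "u \<in> units_of_ring A"
proof -
  have PI: "ring_ideal A P" by (rule maximal_idealD(1)[OF P(1)])
  have Pm: "submodule A P" using PI by (simp add: ring_ideal_iff_submodule)
  define L where "L = submod_mult (principal A u) (submod_pow A P N)"
  note L = principal_mult_pow_ideal[OF PI u uN, folded L_def]
  obtain p where "p \<in> P" "p \<noteq> 0" using P(2) ring_idealD(2)[OF PI] by blast
  then have "p ^ (N + N) \<in> L" "p ^ (N + N) \<noteq> 0" using L(2) power_in_submod_pow by auto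
  then obtain j where "prime_product A j L"
    using ring_ideal_factorization[OF L(1)] by blast
  then have "L = submod_pow A P j" using prime_product_eq_power[OF P(1) _ L(2)] by blast
  moreover have inv: "submod_mult P (inverse_ideal A P) = A" by (rule maximal_ideal_mult_inverse[OF P])
  ultimately have "N = j"
    using principal_mult_pow_eq_pow[OF Pm inv submodule_inverse_ideal nt u] unfolding L_def by blast
  then have "submod_mult (principal A u) (submod_pow A P N) = submod_mult A (submod_pow A P N)"
    using \<open>L = submod_pow A P j\<close> unfolding L_def
    by (simp add: submod_mult_ring_left submodule_submod_pow[OF Pm])
  then have "principal A u = A"
    by (rule submod_mult_cancel_right[OF submod_pow_invertible[OF Pm submodule_inverse_ideal inv]
          submodule_principal submodule_ring])
  then show ?thesis using u by (rule principal_eq_ring_imp_unit)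
qed

lemma units_adjoin_inverse_ideal:
  assumes P: "maximal_ideal_of A P" "P \<noteq> {0}" and nt: "\<not> torsion_ideal A P"
    and b: "b \<in> inverse_ideal A P"
  shows "units_of_ring (adjoin A b) = units_of_ring A"
proof
  show "units_of_ring A \<subseteq> units_of_ring (adjoin A b)"
    using subset_adjoin unfolding units_of_ring_def by auto
  show "units_of_ring (adjoin A b) \<subseteq> units_of_ring A"
  proof
    fix u assume "u \<in> units_of_ring (adjoin A b)"
    then have u: "u \<noteq> 0" "{u, inverse u} \<subseteq> adjoin A b" unfolding units_of_ring_def by auto
    then obtain N where "{u, inverse u} \<subseteq> adjoin_upto A b N"
      using finite_subset_adjoin_upto[OF _ u(2)] by auto
    then have "u \<in> inverse_ideal A (submod_pow A P N)" "inverse u \<in> inverse_ideal A (submod_pow A P N)"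
      using adjoin_upto_subset_inverse_pow[OF maximal_idealD(1)[OF P(1)] b] by auto
    then show "u \<in> units_of_ring A" by (rule unit_if_inverse_pow_bounded[OF P nt u(1)])
  qed
qed

lemma not_torsion_imp_adjoin_same_units:
  assumes "\<not> torsion_class_group A"
  shows "\<exists>B b. overring A B \<and> B \<noteq> A \<and> B = adjoin A b \<and> units_of_ring B = units_of_ring A"
proof -
  obtain P where P: "maximal_ideal_of A P" "P \<noteq> {0}" and nt: "\<not> torsion_ideal A P"
    using torsion_class_groupI assms by blast
  obtain b where b: "b \<in> inverse_ideal A P" "b \<notin> A" using inverse_ideal_not_subset[OF P] by blast
  have "overring A (adjoin A b)" unfolding overring_def using subring_adjoin subset_adjoin by blast
  moreover have "adjoin A b \<noteq> A" using self_in_adjoin b(2) by blast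
  ultimately show ?thesis using units_adjoin_inverse_ideal[OF P nt b(1)] by blast
qed

end

lemma dedekind_domain_imp_dedekind: "dedekind_domain A \<Longrightarrow> dedekind A"
  unfolding dedekind_domain_def is_fraction_field_of_def
  by unfold_locales auto

theorem proposition3p13:
  fixes A :: "'k::field set"
  assumes "dedekind_domain A"
  shows "(torsion_class_group A \<longleftrightarrow> (\<forall>B. overring A B \<longrightarrow> localization_of A B))
       \<and> ((\<forall>B. overring A B \<longrightarrow> localization_of A B) \<longleftrightarrow> (\<forall>B. overring A B \<longrightarrow> well_centered A B))
       \<and> ((\<forall>B. overring A B \<longrightarrow> well_centered A B) \<longleftrightarrow>
          \<not> (\<exists>B b. overring A B \<and> B \<noteq> A \<and> B = adjoin A b \<and> units_of_ring B = units_of_ring A))"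
proof -
  interpret dedekind A using assms by (rule dedekind_domain_imp_dedekind)
  have "torsion_class_group A \<Longrightarrow> \<forall>B. overring A B \<longrightarrow> localization_of A B"
    using torsion_imp_localization by blast
  moreover have "(\<forall>B. overring A B \<longrightarrow> localization_of A B) \<Longrightarrow>
      \<forall>B. overring A B \<longrightarrow> well_centered A B"
    using localization_imp_well_centered by blast
  moreover have "(\<forall>B. overring A B \<longrightarrow> well_centered A B) \<Longrightarrow>
      \<not> (\<exists>B b. overring A B \<and> B \<noteq> A \<and> B = adjoin A b \<and> units_of_ring B = units_of_ring A)"
    using well_centered_same_units_eq by blast
  moreover have "\<not> (\<exists>B b. overring A B \<and> B \<noteq> A \<and> B = adjoin A b \<and> units_of_ring B = units_of_ring A)
      \<Longrightarrow> torsion_class_group A"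
    using not_torsion_imp_adjoin_same_units by blast
  ultimately show ?thesis by blast
qed

end
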